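(* The set of invariant states is $\mathbf{J}=\{\theta^w:w_l\le w\le w_u\}$.
   Context: Let $K\in\mathbb{N}$, $\lambda_k,\mu_k\in(0,\infty)$, $\rho_k=\lambda_k/\mu_k$, $\rho=\sum_k\rho_k>1$; $\Gamma_k$ a continuous probability distribution on $(0,\infty)$ with finite mean, $G_k(x)=1-\Gamma_k([0,x])$. Let $w_l=\sup\{u\ge0:\sum_k\rho_kG_k(u)<1\}$ and $w_u=\sup\{u\ge0:\sum_k\rho_kG_k(u)\le1\}$. A workload fluid model solution is $w:[0,\infty)\to\mathbb{R}_+$ with $w(t)=w(0)+\sum_k\rho_k\int_0^tG_k(w(s))ds-t$ for all $t$; for each $w_0\ge0$ there is a unique one with $w(0)=w_0$ (taken as known). $\mathbf{M}_2$ is the set of finite nonnegative Borel measures on $\mathbb{R}_+^2$, $\mathbf{M}_2^K$ its $K$-fold product. For $\vartheta\in\mathbf{M}_2^K$: $\vartheta_+=\sum_k\vartheta_k$, $w_\vartheta=\sup\{x\ge0:\vartheta_+([x,\infty)\times\mathbb{R}_+)>0\}$. For Borel $B\subset\mathbb{R}_+^2$, $x\in\mathbb{R}_+^2$: $B_x=\{y:y-x\in B\}$; $B_t=B_{(t,t)}$. $C=\mathbb{R}_+\times\{0\}\cup\{0\}\times\mathbb{R}_+$. $\mathbf{I}$ is the set of $\vartheta\in\mathbf{M}_2^K$ with $\vartheta_+(C_x)=0$ for all $x\in\mathbb{R}_+^2$, $w_\vartheta<\infty$, and $\max_kG_k(w_\vartheta-\varepsilon)>0$ for all $\varepsilon>0$.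 $\delta^+_x$ is the unit mass at $x$ if $x>0$, zero measure if $x=0$. A fluid model solution with initial measure $\vartheta\in\mathbf{I}$ is $\zeta:[0,\infty)\to\mathbf{M}_2^K$ with $\zeta(0)=\vartheta$ and $\zeta_k(t)(B)=\zeta_k(0)(B_t)+\lambda_k\int_0^t(\delta^+_{w(s)}\times\Gamma_k)(B_{t-s})ds$ for all $k$, Borel $B$, $t\ge0$, where $w$ is the workload fluid model solution with $w(0)=w_\vartheta$; it exists and is unique for every $\vartheta\in\mathbf{I}$. An invariant state is $\theta\in\mathbf{I}$ such that the unique fluid model solution $\zeta$ with $\zeta(0)=\theta$ satisfies $\zeta(t)=\theta$ for all $t\ge0$. For $w_l\le w\le w_u$, $\theta^w\in\mathbf{M}_2^K$ is the unique element such that for each $k$: $\theta^w_k([w,\infty)\times\mathbb{R}_+)=0$ and, for $0\le a<b\le w$ and $0\le c<d\le\infty$, $\theta^w_k([a,b)\times[c,d))=\lambda_k\int_{w-b}^{w-a}\Gamma_k([c+u,d+u))du$. *)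

theory Defs
  imports "HOL-Probability.Probability"
begin

definition rho :: "('k \<Rightarrow> real) \<Rightarrow> ('k \<Rightarrow> real) \<Rightarrow> 'k \<Rightarrow> real" where
  "rho lam mu k = lam k / mu k"

definition Gbar :: "real measure \<Rightarrow> real \<Rightarrow> real" where
  "Gbar Gam x = 1 - measure Gam {0..x}"

(* w_l and w_u (the sup/inequalities are read so that
   [w_l, w_u] is the set of roots of sum_k rho_k G_k(u) = 1) *)
definition w_l :: "('k::finite \<Rightarrow> real) \<Rightarrow> ('k \<Rightarrow> real) \<Rightarrow> ('k \<Rightarrow> real measure) \<Rightarrow> real" where
  "w_l lam mu Gam = Sup {u. 0 \<le> u \<and> (\<Sum>k\<in>UNIV. rho lam mu k * Gbar (Gam k) u) > 1}"

definition w_u :: "('k::finite \<Rightarrow> real) \<Rightarrow> ('k \<Rightarrow> real) \<Rightarrow> ('k \<Rightarrow> real measure) \<Rightarrow> real" where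
  "w_u lam mu Gam = Sup {u. 0 \<le> u \<and> (\<Sum>k\<in>UNIV. rho lam mu k * Gbar (Gam k) u) \<ge> 1}"

definition workload_sol :: "('k::finite \<Rightarrow> real) \<Rightarrow> ('k \<Rightarrow> real) \<Rightarrow> ('k \<Rightarrow> real measure)
    \<Rightarrow> (real \<Rightarrow> real) \<Rightarrow> real \<Rightarrow> bool" where
  "workload_sol lam mu Gam w w0 \<longleftrightarrow> w 0 = w0 \<and>
     (\<forall>t\<ge>0. 0 \<le> w t \<and> (\<forall>k. (\<lambda>s. Gbar (Gam k) (w s)) integrable_on {0..t}) \<and>
        w t = w 0 + (\<Sum>k\<in>UNIV. rho lam mu k * integral {0..t} (\<lambda>s. Gbar (Gam k) (w s))) - t)"

definition Rp2 :: "(real \<times> real) set" where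
  "Rp2 = {x. 0 \<le> fst x \<and> 0 \<le> snd x}"

(* M_2: finite nonnegative Borel measures on R_+^2, represented as finite Borel measures
   on R^2 that put no mass outside R_+^2 *)
definition M2 :: "(real \<times> real) measure set" where
  "M2 = {m. sets m = sets (borel :: (real \<times> real) measure) \<and> emeasure m UNIV < \<infinity> \<and>
            emeasure m (UNIV - Rp2) = 0}"

definition plus_em :: "('k::finite \<Rightarrow> (real \<times> real) measure) \<Rightarrow> (real \<times> real) set \<Rightarrow> ennreal" where
  "plus_em th A = (\<Sum>k\<in>UNIV. emeasure (th k) A)"

definition wset :: "('k::finite \<Rightarrow> (real \<times> real) measure) \<Rightarrow> real set" where
  "wset th = {x. 0 \<le> x \<and> plus_em th ({x..} \<times> {0..}) > 0}"

(* w_vartheta; the supremum of the empty set is taken to be 0 *)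
definition w_th :: "('k::finite \<Rightarrow> (real \<times> real) measure) \<Rightarrow> real" where
  "w_th th = Sup (insert 0 (wset th))"

definition shift :: "(real \<times> real) set \<Rightarrow> real \<times> real \<Rightarrow> (real \<times> real) set" where
  "shift B x = {y. y - x \<in> B}"

definition Cset :: "(real \<times> real) set" where
  "Cset = {p. (0 \<le> fst p \<and> snd p = 0) \<or> (fst p = 0 \<and> 0 \<le> snd p)}"

definition Istates :: "('k::finite \<Rightarrow> real measure) \<Rightarrow> ('k \<Rightarrow> (real \<times> real) measure) set" where
  "Istates Gam = {th. (\<forall>k. th k \<in> M2) \<and> (\<forall>x\<in>Rp2. plus_em th (shift Cset x) = 0) \<and>
      bdd_above (wset th) \<and>
      (\<forall>\<epsilon>>0. Max (range (\<lambda>k. Gbar (Gam k) (w_th th - \<epsilon>))) > 0)}"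

definition delta_plus :: "real \<Rightarrow> real measure" where
  "delta_plus x = (if x > 0 then return borel x else null_measure borel)"

definition fluid_sol :: "('k::finite \<Rightarrow> real) \<Rightarrow> ('k \<Rightarrow> real) \<Rightarrow> ('k \<Rightarrow> real measure)
    \<Rightarrow> ('k \<Rightarrow> (real \<times> real) measure) \<Rightarrow> (real \<Rightarrow> 'k \<Rightarrow> (real \<times> real) measure) \<Rightarrow> bool" where
  "fluid_sol lam mu Gam th zeta \<longleftrightarrow> zeta 0 = th \<and> (\<forall>t\<ge>0. \<forall>k. zeta t k \<in> M2) \<and>
     (\<exists>w. workload_sol lam mu Gam w (w_th th) \<and>
        (\<forall>k B t. B \<in> sets (borel :: (real \<times> real) measure) \<and> B \<subseteq> Rp2 \<and> 0 \<le> t \<longrightarrow>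
           emeasure (zeta t k) B =
             emeasure (zeta 0 k) (shift B (t, t)) +
             ennreal (lam k) * (\<integral>\<^sup>+ s \<in> {0..t}.
                emeasure (delta_plus (w s) \<Otimes>\<^sub>M Gam k) (shift B (t - s, t - s)) \<partial>lborel)))"

(* invariant states (existence and uniqueness of fluid model solutions being known) *)
definition invariant_state :: "('k::finite \<Rightarrow> real) \<Rightarrow> ('k \<Rightarrow> real) \<Rightarrow> ('k \<Rightarrow> real measure)
    \<Rightarrow> ('k \<Rightarrow> (real \<times> real) measure) \<Rightarrow> bool" where
  "invariant_state lam mu Gam th \<longleftrightarrow> th \<in> Istates Gam \<and>
     (\<exists>zeta. fluid_sol lam mu Gam th zeta \<and> (\<forall>t\<ge>0. zeta t = th))"

definition theta_w :: "('k::finite \<Rightarrow> real) \<Rightarrow> ('k \<Rightarrow> real measure) \<Rightarrow> real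
    \<Rightarrow> 'k \<Rightarrow> (real \<times> real) measure" where
  "theta_w lam Gam w = (\<lambda>k. THE m. m \<in> M2 \<and> emeasure m ({w..} \<times> {0..}) = 0 \<and>
     (\<forall>a b c d. 0 \<le> a \<and> a < b \<and> b \<le> w \<and> 0 \<le> c \<and> c < d \<longrightarrow>
        measure m ({a..<b} \<times> {c..<d}) =
          lam k * (\<integral>u\<in>{w - b..w - a}. measure (Gam k) {c + u..<d + u} \<partial>lborel)) \<and>
     (\<forall>a b c. 0 \<le> a \<and> a < b \<and> b \<le> w \<and> 0 \<le> c \<longrightarrow>
        measure m ({a..<b} \<times> {c..}) =
          lam k * (\<integral>u\<in>{w - b..w - a}. measure (Gam k) {c + u..} \<partial>lborel)))"

end

(*
  Let load u = \<Sum>\<^sub>k \<rho>\<^sub>k G\<^sub>k(u). It is continuous and nonincreasing, and [w_l, w_u] is exactly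
  its level set {load = 1}.

  If load w = 1, the constant w solves the workload equation, and \<theta>\<^sup>w satisfies the fluid
  equation with this constant workload: shifting by t splits the age integral describing \<theta>\<^sup>w
  into the customers older than t (the shifted initial state) and those that arrived during
  [0, t].

  Conversely, let \<theta> be invariant, w0 = w_\<theta>, and W its workload. W never exceeds w0, since
  otherwise arrivals would put mass above w0, where \<theta> has none. If load w0 < 1, W drains
  below w0 and stays there, so the mass \<theta> has just below w0 would never be replenished.
  Hence load w0 \<ge> 1, which forces W \<equiv> w0 and load w0 = 1. At any time T > w0 the fluid
  equation no longer involves the initial state, so \<theta> = \<theta>\<^sup>w\<^sup>0. A \<pi>-\<lambda> argument on rectangles
  identifies the explicit \<theta>\<^sup>w with the measure described in the statement.
*)

theory Submission
  imports Defs
begin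

lemma measurable_fst_borel[measurable]: "fst \<in> borel_measurable (borel :: (real \<times> real) measure)"
  using measurable_fst[of "borel :: real measure" "borel :: real measure"] unfolding borel_prod .

lemma measurable_snd_borel[measurable]: "snd \<in> borel_measurable (borel :: (real \<times> real) measure)"
  using measurable_snd[of "borel :: real measure" "borel :: real measure"] unfolding borel_prod .

lemma sets_Times_borel:
  "A \<in> sets borel \<Longrightarrow> B \<in> sets borel \<Longrightarrow> A \<times> B \<in> sets (borel :: (real \<times> real) measure)"
  using pair_measureI[of A borel B borel] unfolding borel_prod .

lemma sets_Rp2: "Rp2 \<in> sets (borel :: (real \<times> real) measure)"
proof -
  have "{x \<in> space borel. 0 \<le> fst x \<and> 0 \<le> snd x} \<in> sets (borel :: (real \<times> real) measure)"
    by measurable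
  then show ?thesis by (simp add: Rp2_def)
qed

lemma sets_Cset: "Cset \<in> sets (borel :: (real \<times> real) measure)"
proof -
  have "{x \<in> space borel. (0 \<le> fst x \<and> snd x = 0) \<or> (fst x = 0 \<and> 0 \<le> snd x)}
      \<in> sets (borel :: (real \<times> real) measure)"
    by measurable
  then show ?thesis by (simp add: Cset_def)
qed

lemma sets_shift:
  assumes "B \<in> sets (borel :: (real \<times> real) measure)"
  shows "shift B x \<in> sets borel"
proof -
  have "(\<lambda>y::real \<times> real. y - x) \<in> borel_measurable borel"
    by (intro borel_measurable_continuous_onI continuous_intros)
  from measurable_sets[OF this assms] show ?thesis by (simp add: shift_def vimage_def)
qed

lemma shift_subset_quadrant:
  assumes "B \<subseteq> Rp2"
  shows "shift B (t, t) \<subseteq> {t..} \<times> {t..}"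
  using assms by (auto simp: shift_def Rp2_def)

lemma space_M2: "m \<in> M2 \<Longrightarrow> space m = UNIV"
  using sets_eq_imp_space_eq[of m borel] by (simp add: M2_def)

lemma M2_emeasure_eq_measure:
  assumes m: "m \<in> M2"
  shows "emeasure m A = ennreal (measure m A)"
proof (rule emeasure_eq_ennreal_measure)
  have "emeasure m A \<le> emeasure m UNIV"
    using emeasure_space[of m A] space_M2[OF m] by simp
  then show "emeasure m A \<noteq> \<top>" using m by (auto simp: M2_def top_unique)
qed

lemma M2_emeasure_Int_Rp2:
  assumes m: "m \<in> M2" and A: "A \<in> sets borel"
  shows "emeasure m A = emeasure m (A \<inter> Rp2)"
proof -
  have sm: "sets m = sets borel" using m by (simp add: M2_def)
  have "UNIV - Rp2 \<in> null_sets m"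
    using m sm sets_Rp2 by (simp add: M2_def null_sets_def)
  then have "A - Rp2 \<in> null_sets m"
    by (rule null_sets_subset) (use A sm sets_Rp2 in auto)
  then have "emeasure m (A - (A - Rp2)) = emeasure m A"
    using A sm by (intro emeasure_Diff_null_set) auto
  then show ?thesis by (simp add: Diff_Diff_Int)
qed

definition half_open_rects :: "(real \<times> real) set set" where
  "half_open_rects = {{a..<b} \<times> {c..<d} | a b c d. True}"

lemma sets_borel_eq_half_open_rects:
  "sets (borel :: (real \<times> real) measure) = sigma_sets UNIV half_open_rects"
proof -
  let ?E = "range (\<lambda>(a, b). {a..<b::real})"
  let ?C = "range (\<lambda>n::nat. {- real n..<real n})"
  have E: "sets (borel :: real measure) = sigma_sets (space borel) ?E"
    by (subst borel_eq_atLeastLessThan) (simp add: sets_measure_of)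
  have C: "countable ?C" "?C \<subseteq> ?E" "\<Union>?C = space (borel :: real measure)"
  proof -
    show "countable ?C" by simp
    show "?C \<subseteq> ?E" by (auto intro!: image_eqI[where x="(- real n, real n)" for n])
    have "x \<in> \<Union>?C" for x :: real
    proof -
      obtain n :: nat where "\<bar>x\<bar> < real n" using reals_Archimedean2 by blast
      then show ?thesis by (auto intro!: exI[of _ n])
    qed
    then show "\<Union>?C = space (borel :: real measure)" by auto
  qed
  have rects: "{a \<times> b | a b. a \<in> ?E \<and> b \<in> ?E} = half_open_rects"
    unfolding half_open_rects_def by fast
  have "sets (borel \<Otimes>\<^sub>M (borel :: real measure))
      = sets (sigma (space borel \<times> space borel) {a \<times> b | a b. a \<in> ?E \<and> b \<in> ?E})"
    by (rule sets_pair_eq[OF _ E C _ E C]) auto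
  also have "\<dots> = sigma_sets UNIV half_open_rects"
    unfolding rects by (subst sets_measure_of) auto
  finally show ?thesis unfolding borel_prod .
qed

lemma Int_stable_half_open_rects: "Int_stable half_open_rects"
proof (rule Int_stableI)
  fix X Y assume "X \<in> half_open_rects" "Y \<in> half_open_rects"
  then obtain a b c d a' b' c' d' where "X = {a..<b} \<times> {c..<d}" "Y = {a'..<b'} \<times> {c'..<d'}"
    by (auto simp: half_open_rects_def)
  then have "X \<inter> Y = {max a a'..<min b b'} \<times> {max c c'..<min d d'}" by auto
  then show "X \<inter> Y \<in> half_open_rects" by (auto simp: half_open_rects_def)
qed

lemma finite_measure_eq_on_half_open_rects:
  fixes m1 m2 :: "(real \<times> real) measure"
  assumes sets: "sets m1 = sets borel" "sets m2 = sets borel" and fin: "emeasure m1 UNIV < \<infinity>"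
    and eq: "\<And>a b c d. a < b \<Longrightarrow> c < d \<Longrightarrow>
      emeasure m1 ({a..<b} \<times> {c..<d}) = emeasure m2 ({a..<b} \<times> {c..<d})"
  shows "m1 = m2"
proof (rule measure_eqI_generator_eq[OF Int_stable_half_open_rects, of UNIV])
  show "half_open_rects \<subseteq> Pow UNIV" by auto
  show "sets m1 = sigma_sets UNIV half_open_rects" "sets m2 = sigma_sets UNIV half_open_rects"
    using sets by (simp_all add: sets_borel_eq_half_open_rects)
  fix X assume "X \<in> half_open_rects"
  then obtain a b c d where X: "X = {a..<b} \<times> {c..<d}" by (auto simp: half_open_rects_def)
  show "emeasure m1 X = emeasure m2 X"
    using eq[of a b c d] X by (cases "a < b \<and> c < d") auto
next
  let ?A = "\<lambda>n::nat. {- real n..<real n} \<times> {- real n..<real n}"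
  show "range ?A \<subseteq> half_open_rects" by (auto simp: half_open_rects_def)
  have "p \<in> (\<Union>i. ?A i)" for p :: "real \<times> real"
  proof -
    obtain n :: nat where "\<bar>fst p\<bar> + \<bar>snd p\<bar> < real n" using reals_Archimedean2 by blast
    then show ?thesis by (cases p) (auto intro!: exI[of _ n])
  qed
  then show "(\<Union>i. ?A i) = UNIV" by auto
  fix i
  have "emeasure m1 (?A i) \<le> emeasure m1 UNIV"
    using sets by (intro emeasure_mono) auto
  then show "emeasure m1 (?A i) \<noteq> \<infinity>" using fin by (auto simp: top_unique)
qed

lemma emeasure_rect_clip:
  assumes m: "m \<in> M2" and beyond: "emeasure m ({w..} \<times> {0..}) = 0"
  shows "emeasure m ({a..<b} \<times> {c..<d}) = emeasure m ({max a 0..<min b w} \<times> {max c 0..<d})"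
proof (rule antisym)
  have sm: "sets m = sets borel" using m by (simp add: M2_def)
  let ?X1 = "{max a 0..<min b w} \<times> {max c 0..<d}" and ?X2 = "{max a 0..<b} \<times> {max c 0..<d}"
  have X: "?X1 \<in> sets m" "?X2 \<in> sets m" "{w..} \<times> {0..} \<in> sets m" "{a..<b} \<times> {c..<d} \<in> sets m"
    unfolding sm by (simp_all add: sets_Times_borel)
  have "emeasure m ({a..<b} \<times> {c..<d}) = emeasure m ({a..<b} \<times> {c..<d} \<inter> Rp2)"
    using m X(4) sm by (intro M2_emeasure_Int_Rp2) simp_all
  also have "{a..<b} \<times> {c..<d} \<inter> Rp2 = ?X2" by (auto simp: Rp2_def)
  also have "emeasure m ?X2 \<le> emeasure m (?X1 \<union> {w..} \<times> {0..})"
    using X by (intro emeasure_mono) auto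
  also have "\<dots> \<le> emeasure m ?X1 + emeasure m ({w..} \<times> {0..})"
    using X by (intro emeasure_subadditive) auto
  finally show "emeasure m ({a..<b} \<times> {c..<d}) \<le> emeasure m ?X1" using beyond by simp
  show "emeasure m ?X1 \<le> emeasure m ({a..<b} \<times> {c..<d})"
    using X by (intro emeasure_mono) auto
qed

lemma M2_eqI_rects_below:
  assumes m1: "m1 \<in> M2" "emeasure m1 ({w..} \<times> {0..}) = 0"
    and m2: "m2 \<in> M2" "emeasure m2 ({w..} \<times> {0..}) = 0"
    and eq: "\<And>a b c d. 0 \<le> a \<Longrightarrow> a < b \<Longrightarrow> b \<le> w \<Longrightarrow> 0 \<le> c \<Longrightarrow> c < d \<Longrightarrow>
      measure m1 ({a..<b} \<times> {c..<d}) = measure m2 ({a..<b} \<times> {c..<d})"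
  shows "m1 = m2"
proof (rule finite_measure_eq_on_half_open_rects)
  show "sets m1 = sets borel" "sets m2 = sets borel" "emeasure m1 UNIV < \<infinity>"
    using m1 m2 by (simp_all add: M2_def)
  fix a b c d :: real
  let ?X = "{max a 0..<min b w} \<times> {max c 0..<d}"
  have "emeasure m1 ?X = emeasure m2 ?X"
  proof (cases "max a 0 < min b w \<and> max c 0 < d")
    case True
    then have "measure m1 ?X = measure m2 ?X" by (intro eq) auto
    then show ?thesis by (simp add: M2_emeasure_eq_measure[OF m1(1)] M2_emeasure_eq_measure[OF m2(1)])
  next
    case False
    then have "?X = {}" by auto
    then show ?thesis by (metis emeasure_empty)
  qed
  then show "emeasure m1 ({a..<b} \<times> {c..<d}) = emeasure m2 ({a..<b} \<times> {c..<d})"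
    using emeasure_rect_clip[OF m1, of a b c d] emeasure_rect_clip[OF m2, of a b c d] by (simp only:)
qed

lemma nn_integral_reflect:
  fixes g :: "real \<Rightarrow> ennreal"
  assumes "g \<in> borel_measurable borel"
  shows "(\<integral>\<^sup>+ s\<in>{0..t}. g (t - s) \<partial>lborel) = (\<integral>\<^sup>+ r. indicator {0..t} r * g r \<partial>lborel)"
proof -
  have "(\<lambda>r. indicator {0..t} r * g r) \<in> borel_measurable borel" using assms by measurable
  then have "(\<integral>\<^sup>+ r. indicator {0..t} r * g r \<partial>lborel)
      = ennreal \<bar>-1\<bar> * (\<integral>\<^sup>+ x. indicator {0..t} (t + (-1) * x) * g (t + (-1) * x) \<partial>lborel)"
    by (rule nn_integral_real_affine) simp
  also have "\<dots> = (\<integral>\<^sup>+ s\<in>{0..t}. g (t - s) \<partial>lborel)"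
    by (auto intro!: nn_integral_cong simp: indicator_def mult.commute)
  finally show ?thesis ..
qed

lemma nn_integral_translate:
  fixes g :: "real \<Rightarrow> ennreal"
  assumes "g \<in> borel_measurable borel"
  shows "(\<integral>\<^sup>+ r. indicator {0..} r * g (r + t) \<partial>lborel) = (\<integral>\<^sup>+ r. indicator {t..} r * g r \<partial>lborel)"
proof -
  have "(\<lambda>r. indicator {t..} r * g r) \<in> borel_measurable borel" using assms by measurable
  then have "(\<integral>\<^sup>+ r. indicator {t..} r * g r \<partial>lborel)
      = ennreal \<bar>1\<bar> * (\<integral>\<^sup>+ x. indicator {t..} (t + 1 * x) * g (t + 1 * x) \<partial>lborel)"
    by (rule nn_integral_real_affine) simp
  also have "\<dots> = (\<integral>\<^sup>+ r. indicator {0..} r * g (r + t) \<partial>lborel)"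
    by (auto intro!: nn_integral_cong simp: indicator_def add.commute)
  finally show ?thesis ..
qed

lemma nn_integral_split_halfline:
  fixes g :: "real \<Rightarrow> ennreal"
  assumes g: "g \<in> borel_measurable borel" and t: "0 \<le> t"
  shows "(\<integral>\<^sup>+ r. indicator {0..} r * g r \<partial>lborel) =
    (\<integral>\<^sup>+ r. indicator {t..} r * g r \<partial>lborel) + (\<integral>\<^sup>+ r. indicator {0..t} r * g r \<partial>lborel)"
proof -
  have "indicator {0..} r * g r = indicator {t..} r * g r + indicator {0..t} r * g r" if "r \<noteq> t" for r
    using t that by (cases "r < 0"; cases "r < t") (simp_all add: indicator_def)
  then have "(\<integral>\<^sup>+ r. indicator {0..} r * g r \<partial>lborel)
      = (\<integral>\<^sup>+ r. indicator {t..} r * g r + indicator {0..t} r * g r \<partial>lborel)"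
    by (intro nn_integral_cong_AE) (use AE_lborel_singleton[of t] in \<open>auto elim: AE_mp\<close>)
  also have "\<dots> = (\<integral>\<^sup>+ r. indicator {t..} r * g r \<partial>lborel) + (\<integral>\<^sup>+ r. indicator {0..t} r * g r \<partial>lborel)"
  proof (rule nn_integral_add)
    show "(\<lambda>r. indicator {t..} r * g r) \<in> borel_measurable lborel" using g by simp
    show "(\<lambda>r. indicator {0..t} r * g r) \<in> borel_measurable lborel" using g by simp
  qed
  finally show ?thesis .
qed

lemma nn_integral_pos_of_interval:
  fixes g :: "real \<Rightarrow> ennreal"
  assumes "a < b" "\<And>r. a \<le> r \<Longrightarrow> r \<le> b \<Longrightarrow> c \<le> g r" "0 < c"
  shows "0 < (\<integral>\<^sup>+ r. g r \<partial>lborel)"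
proof -
  have "0 < c * ennreal (b - a)" using assms by (simp add: ennreal_zero_less_mult_iff)
  also have "c * ennreal (b - a) = (\<integral>\<^sup>+ r. c * indicator {a..b} r \<partial>lborel)"
    using assms(1) by (simp add: nn_integral_cmult_indicator)
  also have "\<dots> \<le> (\<integral>\<^sup>+ r. g r \<partial>lborel)"
    by (intro nn_integral_mono) (simp add: indicator_def assms(2))
  finally show ?thesis .
qed

subsection \<open>The load\<close>

locale fluid_model =
  fixes lam mu :: "'k::finite \<Rightarrow> real" and Gam :: "'k \<Rightarrow> real measure"
  assumes lam_pos: "\<And>k. 0 < lam k"
    and mu_pos: "\<And>k. 0 < mu k"
    and rho_gt1: "(\<Sum>k\<in>UNIV. rho lam mu k) > 1"
    and Gam_prob: "\<And>k. prob_space (Gam k)"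
    and Gam_borel: "\<And>k. sets (Gam k) = sets (borel :: real measure)"
    and Gam_pos: "\<And>k. emeasure (Gam k) {..0} = 0"
    and Gam_cont: "\<And>k x. measure (Gam k) {x} = 0"
begin

definition load :: "real \<Rightarrow> real" where
  "load u = (\<Sum>k\<in>UNIV. rho lam mu k * Gbar (Gam k) u)"

lemma real_distribution_Gam: "real_distribution (Gam k)"
  using Gam_prob Gam_borel by (simp add: real_distribution_def real_distribution_axioms_def)

lemma sets_Gam[measurable_cong]: "sets (Gam k) = sets borel"
  by (rule Gam_borel)

lemma space_Gam[simp]: "space (Gam k) = UNIV"
  using sets_eq_imp_space_eq[OF Gam_borel] by simp

lemma emeasure_Gam: "emeasure (Gam k) A = ennreal (measure (Gam k) A)"
proof -
  interpret prob_space "Gam k" by (rule Gam_prob)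
  show ?thesis by (rule emeasure_eq_measure)
qed

lemma rho_pos: "0 < rho lam mu k"
  using lam_pos mu_pos by (simp add: rho_def)

lemma Gbar_eq_one_minus_cdf: "Gbar (Gam k) u = 1 - cdf (Gam k) u"
proof -
  interpret real_distribution "Gam k" by (rule real_distribution_Gam)
  have "{..0} \<in> null_sets (Gam k)"
    using Gam_pos by (intro null_setsI) (simp_all add: Gam_borel)
  then have "{..<0} \<in> null_sets (Gam k)"
    by (rule null_sets_subset) (auto simp: Gam_borel)
  then have "measure (Gam k) ({..u} - {..<0}) = measure (Gam k) {..u}"
    by (intro measure_Diff_null_set) auto
  moreover have "{..u} - {..<0} = {0..u}" by auto
  ultimately show ?thesis by (simp add: Gbar_def cdf_def)
qed

lemma Gbar_eq_measure_greaterThan: "Gbar (Gam k) u = measure (Gam k) {u<..}"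
proof -
  interpret real_distribution "Gam k" by (rule real_distribution_Gam)
  have "measure (Gam k) {u<..} = 1 - measure (Gam k) {..u}"
    using prob_compl[of "{..u}"] by (simp add: Compl_eq_Diff_UNIV[symmetric])
  then show ?thesis by (simp add: Gbar_eq_one_minus_cdf cdf_def)
qed

lemma Gbar_eq_measure_atLeast: "Gbar (Gam k) u = measure (Gam k) {u..}"
proof -
  interpret real_distribution "Gam k" by (rule real_distribution_Gam)
  have "measure (Gam k) ({u} \<union> {u<..}) = measure (Gam k) {u} + measure (Gam k) {u<..}"
    by (rule finite_measure_Union) auto
  moreover have "{u} \<union> {u<..} = {u..}" by auto
  ultimately show ?thesis using Gam_cont by (simp add: Gbar_eq_measure_greaterThan)
qed

lemma Gbar_nonneg: "0 \<le> Gbar (Gam k) u"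
  by (simp add: Gbar_eq_measure_greaterThan)

lemma Gbar_le_1: "Gbar (Gam k) u \<le> 1"
proof -
  interpret prob_space "Gam k" by (rule Gam_prob)
  show ?thesis by (simp add: Gbar_eq_measure_greaterThan)
qed

lemma Gbar_antimono: "u \<le> v \<Longrightarrow> Gbar (Gam k) v \<le> Gbar (Gam k) u"
proof -
  interpret real_distribution "Gam k" by (rule real_distribution_Gam)
  show "u \<le> v \<Longrightarrow> ?thesis" by (simp add: Gbar_eq_one_minus_cdf cdf_nondecreasing)
qed

lemma Gbar_0: "Gbar (Gam k) 0 = 1"
  using Gam_cont by (simp add: Gbar_def)

lemma isCont_Gbar: "isCont (Gbar (Gam k)) u"
proof -
  interpret real_distribution "Gam k" by (rule real_distribution_Gam)
  have "isCont (cdf (Gam k)) u" using isCont_cdf Gam_cont by simp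
  then show ?thesis unfolding Gbar_eq_one_minus_cdf[abs_def] by (intro continuous_intros)
qed

lemma Gbar_ge_half_near_0: "\<exists>\<delta>>0. \<forall>r\<le>\<delta>. 1/2 \<le> Gbar (Gam k) r"
proof -
  have "\<forall>\<^sub>F x in at 0. 1/2 < Gbar (Gam k) x"
    using order_tendstoD(1)[OF isCont_Gbar[where k=k and u=0, unfolded isCont_def], of "1/2"] Gbar_0
    by simp
  then obtain d where d: "d > 0" "\<And>x. x \<noteq> 0 \<Longrightarrow> dist x 0 < d \<Longrightarrow> 1/2 < Gbar (Gam k) x"
    by (auto simp: eventually_at)
  then have "1/2 < Gbar (Gam k) (d/2)" by simp
  then have "1/2 \<le> Gbar (Gam k) r" if "r \<le> d/2" for r
    using Gbar_antimono[OF that, of k] by linarith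
  then show ?thesis using d(1) by (intro exI[of _ "d/2"]) auto
qed

lemma isCont_load: "isCont load u"
  unfolding load_def[abs_def] by (intro continuous_intros isCont_Gbar)

lemma load_antimono: "u \<le> v \<Longrightarrow> load v \<le> load u"
  unfolding load_def by (intro sum_mono mult_left_mono Gbar_antimono) (auto intro: less_imp_le rho_pos)

lemma load_nonneg: "0 \<le> load u"
  unfolding load_def by (intro sum_nonneg mult_nonneg_nonneg Gbar_nonneg) (auto intro: less_imp_le rho_pos)

lemma load_le_rho_sum: "load u \<le> (\<Sum>k\<in>UNIV. rho lam mu k)"
  unfolding load_def by (intro sum_mono) (use Gbar_le_1 rho_pos in \<open>auto intro: mult_left_le less_imp_le\<close>)

lemma load_0: "load 0 = (\<Sum>k\<in>UNIV. rho lam mu k)"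
  by (simp add: load_def Gbar_0)

lemma load_tendsto_0: "(load \<longlongrightarrow> 0) at_top"
proof -
  have "((\<lambda>u. \<Sum>k\<in>UNIV. rho lam mu k * Gbar (Gam k) u) \<longlongrightarrow> (\<Sum>k\<in>UNIV. rho lam mu k * 0)) at_top"
  proof (intro tendsto_intros)
    fix k
    interpret real_distribution "Gam k" by (rule real_distribution_Gam)
    show "(Gbar (Gam k) \<longlongrightarrow> 0) at_top"
      using tendsto_diff[OF tendsto_const cdf_lim_at_top_prob, of 1]
      by (simp add: Gbar_eq_one_minus_cdf[abs_def])
  qed
  then show ?thesis by (simp add: load_def[abs_def])
qed

lemma load_eq_1_pos:
  assumes "load w = 1"
  shows "0 < w"
proof (rule ccontr)
  assume "\<not> 0 < w"
  then have "load 0 \<le> load w" by (intro load_antimono) simp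
  then show False using load_0 rho_gt1 assms by simp
qed

lemma load_gt_right: "a < load w \<Longrightarrow> \<exists>e>0. a < load (w + e)"
proof -
  assume "a < load w"
  then have "\<forall>\<^sub>F x in at w. a < load x"
    using order_tendstoD(1)[OF isCont_load[of w, unfolded isCont_def]] by blast
  then obtain d where "d > 0" "\<And>x. x \<noteq> w \<Longrightarrow> dist x w < d \<Longrightarrow> a < load x"
    by (auto simp: eventually_at)
  then show ?thesis by (intro exI[of _ "d/2"]) (auto simp: dist_real_def)
qed

lemma load_lt_left: "load w < a \<Longrightarrow> \<exists>e>0. load (w - e) < a"
proof -
  assume "load w < a"
  then have "\<forall>\<^sub>F x in at w. load x < a"
    using order_tendstoD(2)[OF isCont_load[of w, unfolded isCont_def]] by blast
  then obtain d where "d > 0" "\<And>x. x \<noteq> w \<Longrightarrow> dist x w < d \<Longrightarrow> load x < a"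
    by (auto simp: eventually_at)
  then show ?thesis by (intro exI[of _ "d/2"]) (auto simp: dist_real_def)
qed

lemma bdd_above_load_ge_1: "bdd_above {u. 0 \<le> u \<and> 1 \<le> load u}"
proof -
  obtain U where U: "\<And>u. U \<le> u \<Longrightarrow> load u < 1"
    using order_tendstoD(2)[OF load_tendsto_0, of 1] by (auto simp: eventually_at_top_linorder)
  have "u \<le> U" if "1 \<le> load u" for u
  proof (rule ccontr)
    assume "\<not> u \<le> U"
    then have "load u < 1" by (intro U) simp
    with that show False by simp
  qed
  then show ?thesis by (auto simp: bdd_above_def)
qed

lemma load_eq_1_iff: "load w = 1 \<longleftrightarrow> w_l lam mu Gam \<le> w \<and> w \<le> w_u lam mu Gam"
proof -
  let ?S1 = "{u. 0 \<le> u \<and> 1 < load u}" and ?S2 = "{u. 0 \<le> u \<and> 1 \<le> load u}"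
  have wl: "w_l lam mu Gam = Sup ?S1" and wu: "w_u lam mu Gam = Sup ?S2"
    by (simp_all add: w_l_def w_u_def load_def)
  have bdd1: "bdd_above ?S1"
    by (rule bdd_above_mono[OF bdd_above_load_ge_1]) auto
  have zero: "0 \<in> ?S1" "0 \<in> ?S2" using load_0 rho_gt1 by simp_all
  show ?thesis
  proof
    assume w: "load w = 1"
    have "u \<le> w" if "1 < load u" for u
    proof (rule ccontr)
      assume "\<not> u \<le> w"
      then have "load u \<le> load w" by (intro load_antimono) simp
      with w that show False by simp
    qed
    then have "Sup ?S1 \<le> w" using zero by (intro cSup_least) auto
    moreover have "w \<le> Sup ?S2"
      using w load_eq_1_pos[OF w] by (intro cSup_upper[OF _ bdd_above_load_ge_1]) auto
    ultimately show "w_l lam mu Gam \<le> w \<and> w \<le> w_u lam mu Gam" by (simp add: wl wu)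
  next
    assume w: "w_l lam mu Gam \<le> w \<and> w \<le> w_u lam mu Gam"
    have w0: "0 \<le> w" using cSup_upper[OF zero(1) bdd1] w by (simp add: wl)
    have "\<not> 1 < load w"
    proof
      assume "1 < load w"
      then obtain e where "e > 0" "1 < load (w + e)" using load_gt_right by blast
      then have "w + e \<le> Sup ?S1" using w0 by (intro cSup_upper[OF _ bdd1]) auto
      with w \<open>e > 0\<close> show False by (simp add: wl)
    qed
    moreover have "\<not> load w < 1"
    proof
      assume "load w < 1"
      then obtain e where e: "e > 0" "load (w - e) < 1" using load_lt_left by blast
      have "u \<le> w - e" if "1 \<le> load u" for u
      proof (rule ccontr)
        assume "\<not> u \<le> w - e"
        then have "load u \<le> load (w - e)" by (intro load_antimono) simp
        with e that show False by simp
      qed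
      then have "Sup ?S2 \<le> w - e" using zero by (intro cSup_least) auto
      with w e show False by (simp add: wu)
    qed
    ultimately show "load w = 1" by simp
  qed
qed

end

subsection \<open>The measures \<open>\<theta>\<^sup>w\<close>\<close>

context fluid_model
begin

lemma sets_lborel_Gam: "sets (lborel \<Otimes>\<^sub>M Gam k) = sets (borel :: (real \<times> real) measure)"
proof -
  have "sets (lborel \<Otimes>\<^sub>M Gam k) = sets (borel \<Otimes>\<^sub>M (borel :: real measure))"
    by (rule sets_pair_measure_cong) (simp_all add: Gam_borel)
  then show ?thesis unfolding borel_prod .
qed

lemma sets_borel_Gam[simp]: "sets (borel \<Otimes>\<^sub>M Gam k) = sets (borel :: (real \<times> real) measure)"
  using sets_lborel_Gam[of k] by simp

text \<open>A class-\<open>k\<close> customer that arrived \<open>r\<close> time units ago with initial value \<open>v \<sim> \<Gamma>\<^sub>k\<close> sits at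
  \<open>(w - r, v - r)\<close>; \<open>\<theta>\<^sup>w\<^sub>k\<close> is the image of \<open>\<lambda>\<^sub>k \<cdot> Lebesgue|[0,\<infinity>) \<otimes> \<Gamma>\<^sub>k\<close> under this map,
  restricted to the quadrant.\<close>

definition age_map :: "real \<Rightarrow> real \<times> real \<Rightarrow> real \<times> real" where
  "age_map w p = (w - fst p, snd p - fst p)"

definition age_density :: "'k \<Rightarrow> real \<Rightarrow> real \<times> real \<Rightarrow> ennreal" where
  "age_density k w p = ennreal (lam k) * indicator ({0..} \<times> UNIV) p * indicator Rp2 (age_map w p)"

definition theta :: "real \<Rightarrow> 'k \<Rightarrow> (real \<times> real) measure" where
  "theta w k = distr (density (lborel \<Otimes>\<^sub>M Gam k) (age_density k w)) borel (age_map w)"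

definition age_section :: "'k \<Rightarrow> real \<Rightarrow> (real \<times> real) set \<Rightarrow> real \<Rightarrow> ennreal" where
  "age_section k w C r = emeasure (Gam k) {v. (w - r, v - r) \<in> C}"

lemma sets_theta[simp]: "sets (theta w k) = sets borel"
  by (simp add: theta_def)

lemma measurable_age_map: "age_map w \<in> measurable (lborel \<Otimes>\<^sub>M Gam k) borel"
proof -
  have "age_map w \<in> measurable borel borel"
    unfolding age_map_def by (rule borel_measurable_Pair) measurable
  then show ?thesis by (simp add: measurable_def sets_lborel_Gam space_pair_measure)
qed

lemma measurable_age_density: "age_density k w \<in> borel_measurable (lborel \<Otimes>\<^sub>M Gam k)"
proof -
  have "age_map w \<in> borel_measurable borel"
    unfolding age_map_def by (rule borel_measurable_Pair) measurable
  then have ind: "(\<lambda>p. indicator Rp2 (age_map w p) :: ennreal) \<in> borel_measurable borel"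
    using measurable_compose[OF _ borel_measurable_indicator[OF sets_Rp2]] by blast
  have "({0..} \<times> UNIV :: (real \<times> real) set) \<in> sets borel"
    by (rule sets_Times_borel) auto
  then have "(\<lambda>p::real \<times> real. ennreal (lam k) * indicator ({0..} \<times> UNIV) p) \<in> borel_measurable borel"
    by measurable
  then have "age_density k w \<in> borel_measurable borel"
    unfolding age_density_def by (rule borel_measurable_times_ennreal[OF _ ind])
  then show ?thesis by (simp add: measurable_def sets_lborel_Gam space_pair_measure)
qed

lemma measurable_age_section:
  assumes C: "C \<in> sets (borel :: (real \<times> real) measure)"
  shows "age_section k w C \<in> borel_measurable borel"
proof -
  interpret prob_space "Gam k" by (rule Gam_prob)
  have "(\<lambda>p::real \<times> real. (w - fst p, snd p - fst p)) -` C \<inter> space borel \<in> sets borel"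
    by (rule measurable_sets[OF borel_measurable_Pair C]) measurable
  then have "{p. (w - fst p, snd p - fst p) \<in> C} \<in> sets (lborel \<Otimes>\<^sub>M Gam k)"
    by (simp add: sets_lborel_Gam vimage_def)
  from measurable_emeasure_Pair[OF this] show ?thesis
    by (simp add: age_section_def[abs_def] vimage_def measurable_lborel1)
qed

lemma emeasure_theta:
  assumes B: "B \<in> sets (borel :: (real \<times> real) measure)"
  shows "emeasure (theta w k) B =
    ennreal (lam k) * (\<integral>\<^sup>+ r. indicator {0..} r * age_section k w (B \<inter> Rp2) r \<partial>lborel)"
proof -
  interpret G: prob_space "Gam k" by (rule Gam_prob)
  let ?M = "lborel \<Otimes>\<^sub>M Gam k"
  let ?A = "age_map w -` B \<inter> space ?M"
  have BR: "B \<inter> Rp2 \<in> sets borel" using B sets_Rp2 by auto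
  have A: "?A \<in> sets ?M" using measurable_sets[OF measurable_age_map B] .
  have "emeasure (theta w k) B = emeasure (density ?M (age_density k w)) ?A"
    unfolding theta_def by (subst emeasure_distr) (simp_all add: measurable_age_map B)
  also have "\<dots> = (\<integral>\<^sup>+ p. age_density k w p * indicator ?A p \<partial>?M)"
    by (rule emeasure_density[OF measurable_age_density A])
  also have "\<dots> = (\<integral>\<^sup>+ r. \<integral>\<^sup>+ v. age_density k w (r, v) * indicator ?A (r, v) \<partial>Gam k \<partial>lborel)"
    by (rule G.nn_integral_fst[symmetric]) (use measurable_age_density A in measurable)
  also have "\<dots> = (\<integral>\<^sup>+ r. \<integral>\<^sup>+ v. (ennreal (lam k) * indicator {0..} r) *
      indicator {v. (w - r, v - r) \<in> B \<inter> Rp2} v \<partial>Gam k \<partial>lborel)"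
    by (intro nn_integral_cong) (auto simp: age_density_def age_map_def indicator_def space_pair_measure)
  also have "\<dots> = (\<integral>\<^sup>+ r. (ennreal (lam k) * indicator {0..} r) * age_section k w (B \<inter> Rp2) r \<partial>lborel)"
  proof (intro nn_integral_cong)
    fix r :: real
    have "(\<lambda>v::real. (w - r, v + - r)) -` (B \<inter> Rp2) \<inter> space borel \<in> sets borel"
      by (rule measurable_sets[OF borel_measurable_Pair BR]) measurable
    then have "{v. (w - r, v - r) \<in> B \<inter> Rp2} \<in> sets (Gam k)"
      by (simp add: Gam_borel vimage_def)
    then show "(\<integral>\<^sup>+ v. (ennreal (lam k) * indicator {0..} r) * indicator {v. (w - r, v - r) \<in> B \<inter> Rp2} v \<partial>Gam k)
       = (ennreal (lam k) * indicator {0..} r) * age_section k w (B \<inter> Rp2) r"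
      by (simp add: nn_integral_cmult_indicator age_section_def)
  qed
  also have "\<dots> = ennreal (lam k) * (\<integral>\<^sup>+ r. indicator {0..} r * age_section k w (B \<inter> Rp2) r \<partial>lborel)"
    by (subst nn_integral_cmult[symmetric]) (use measurable_age_section[OF BR] in \<open>auto simp: mult.assoc\<close>)
  finally show ?thesis .
qed

lemma emeasure_theta_quadrant:
  assumes "B \<in> sets borel" "B \<subseteq> Rp2"
  shows "emeasure (theta w k) B = ennreal (lam k) * (\<integral>\<^sup>+ r. indicator {0..} r * age_section k w B r \<partial>lborel)"
  using emeasure_theta[OF assms(1)] assms(2) by (simp add: Int_absorb2)

lemma theta_in_M2:
  assumes "0 \<le> w"
  shows "theta w k \<in> M2"
proof -
  interpret prob_space "Gam k" by (rule Gam_prob)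
  have "UNIV - Rp2 \<in> sets borel" using sets_Rp2 by auto
  from emeasure_theta[OF this] have "emeasure (theta w k) (UNIV - Rp2) = 0"
    by (simp add: age_section_def)
  moreover have "emeasure (theta w k) UNIV < \<infinity>"
  proof -
    have "indicator {0..} r * age_section k w Rp2 r \<le> indicator {0..w} r" for r :: real
    proof (cases "0 \<le> r \<and> r \<le> w")
      case True then show ?thesis by (simp add: indicator_def age_section_def emeasure_le_1)
    next
      case False
      then have "r < 0 \<or> {v. (w - r, v - r) \<in> Rp2} = {}" by (auto simp: Rp2_def)
      then show ?thesis by (auto simp: indicator_def age_section_def)
    qed
    then have "emeasure (theta w k) UNIV \<le> ennreal (lam k) * (\<integral>\<^sup>+ r. indicator {0..w} r \<partial>lborel)"
      using emeasure_theta[of UNIV w k] by (simp del: nn_integral_indicator add: mult_left_mono nn_integral_mono)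
    also have "\<dots> < \<infinity>" using assms by (simp add: ennreal_mult_less_top)
    finally show ?thesis .
  qed
  ultimately show ?thesis by (simp add: M2_def)
qed

lemma measure_theta_rect:
  assumes ab: "0 \<le> a" "a < b" "b \<le> w" and D: "D \<in> sets borel" "D \<subseteq> {0..}"
  shows "measure (theta w k) ({a..<b} \<times> D) =
    lam k * (\<integral>u\<in>{w - b..w - a}. measure (Gam k) {v. v - u \<in> D} \<partial>lborel)"
proof -
  let ?h = "\<lambda>r. measure (Gam k) {v. v - r \<in> D}"
  have R: "{a..<b} \<times> D \<in> sets borel" "{a..<b} \<times> D \<subseteq> Rp2"
    using ab D by (auto intro: sets_Times_borel simp: Rp2_def)
  have "indicator {0..} r * age_section k w ({a..<b} \<times> D) r = ennreal (indicator {w - b..w - a} r *\<^sub>R ?h r)"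
    if "r \<noteq> w - b" for r
  proof (cases "a \<le> w - r \<and> w - r < b")
    case True
    then have "{v. (w - r, v - r) \<in> {a..<b} \<times> D} = {v. v - r \<in> D}" by auto
    with True ab show ?thesis by (simp add: age_section_def emeasure_Gam indicator_def)
  next
    case False
    then have "{v. (w - r, v - r) \<in> {a..<b} \<times> D} = {}" by auto
    then have "age_section k w ({a..<b} \<times> D) r = 0" by (simp only: age_section_def emeasure_empty)
    moreover have "indicator {w - b..w - a} r = (0::real)" using False that by auto
    ultimately show ?thesis by simp
  qed
  then have AE: "AE r in lborel. indicator {0..} r * age_section k w ({a..<b} \<times> D) r
      = ennreal (indicator {w - b..w - a} r *\<^sub>R ?h r)"
    using AE_lborel_singleton[of "w - b"] by (auto elim: AE_mp)
  have hm: "(\<lambda>r. indicator {w - b..w - a} r *\<^sub>R ?h r) \<in> borel_measurable lborel"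
  proof -
    interpret G: prob_space "Gam k" by (rule Gam_prob)
    have "(\<lambda>p::real \<times> real. snd p - fst p) -` D \<inter> space borel \<in> sets borel"
      by (rule measurable_sets[OF _ D(1)]) measurable
    then have "{p::real \<times> real. snd p - fst p \<in> D} \<in> sets (borel \<Otimes>\<^sub>M Gam k)"
      by (simp add: vimage_def)
    from G.measurable_emeasure_Pair[OF this] have "?h \<in> borel_measurable borel"
      by (simp add: vimage_def measure_def)
    then show ?thesis by measurable
  qed
  have "measure (theta w k) ({a..<b} \<times> D)
      = enn2real (ennreal (lam k) * (\<integral>\<^sup>+ r. indicator {0..} r * age_section k w ({a..<b} \<times> D) r \<partial>lborel))"
    by (simp add: measure_def emeasure_theta_quadrant[OF R])
  also have "\<dots> = lam k * enn2real (\<integral>\<^sup>+ r. indicator {0..} r * age_section k w ({a..<b} \<times> D) r \<partial>lborel)"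
    using lam_pos[of k] by (simp add: enn2real_mult)
  also have "enn2real (\<integral>\<^sup>+ r. indicator {0..} r * age_section k w ({a..<b} \<times> D) r \<partial>lborel)
      = (\<integral>r. indicator {w - b..w - a} r *\<^sub>R ?h r \<partial>lborel)"
    by (rule enn2real_nn_integral_eq_integral[OF AE _ hm]) auto
  finally show ?thesis by (simp add: set_lebesgue_integral_def)
qed

lemma emeasure_theta_beyond:
  assumes "0 \<le> w" "w \<le> x"
  shows "emeasure (theta w k) ({x..} \<times> {0..}) = 0"
proof -
  have "indicator {0..} r * age_section k w ({x..} \<times> {0..}) r = 0" if "r \<noteq> 0" for r :: real
  proof (cases "r < 0")
    case False
    with assms that have "{v. (w - r, v - r) \<in> {x..} \<times> {0..}} = {}" by auto
    then show ?thesis by (simp only: age_section_def emeasure_empty mult_zero_right)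
  qed (simp add: indicator_def)
  then have "AE r in lborel. indicator {0..} r * age_section k w ({x..} \<times> {0..}) r = 0"
    using AE_lborel_singleton[of 0] by (auto elim: AE_mp)
  then have "(\<integral>\<^sup>+ r. indicator {0..} r * age_section k w ({x..} \<times> {0..}) r \<partial>lborel) = (\<integral>\<^sup>+ r. 0 \<partial>(lborel :: real measure))"
    by (rule nn_integral_cong_AE)
  moreover have "{x..} \<times> {0::real..} \<in> sets borel" by (rule sets_Times_borel) auto
  moreover have "{x..} \<times> {0..} \<subseteq> Rp2" using assms by (auto simp: Rp2_def)
  ultimately show ?thesis by (simp add: emeasure_theta_quadrant)
qed

lemma emeasure_theta_Cset: "emeasure (theta w k) (shift Cset x) = 0"
proof -
  have S: "shift Cset x \<in> sets borel" by (rule sets_shift[OF sets_Cset])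
  have "age_section k w (shift Cset x \<inter> Rp2) r = 0" if "r \<noteq> w - fst x" for r
  proof -
    have "{v. (w - r, v - r) \<in> shift Cset x \<inter> Rp2} \<subseteq> {snd x + r}"
      using that by (auto simp: shift_def Cset_def)
    then have "age_section k w (shift Cset x \<inter> Rp2) r \<le> emeasure (Gam k) {snd x + r}"
      unfolding age_section_def by (intro emeasure_mono) auto
    then show ?thesis using Gam_cont by (simp add: emeasure_Gam)
  qed
  then have "AE r in lborel. indicator {0..} r * age_section k w (shift Cset x \<inter> Rp2) r = 0"
    using AE_lborel_singleton[of "w - fst x"] by (auto elim: AE_mp)
  then have "(\<integral>\<^sup>+ r. indicator {0..} r * age_section k w (shift Cset x \<inter> Rp2) r \<partial>lborel) = (\<integral>\<^sup>+ r. 0 \<partial>(lborel :: real measure))"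
    by (rule nn_integral_cong_AE)
  then show ?thesis by (simp add: emeasure_theta[OF S])
qed

lemma emeasure_theta_pos:
  assumes "0 \<le> x" "x < w"
  shows "0 < emeasure (theta w k) ({x..} \<times> {0..})"
proof -
  obtain \<delta> where \<delta>: "\<delta> > 0" "\<And>r. r \<le> \<delta> \<Longrightarrow> 1/2 \<le> Gbar (Gam k) r"
    using Gbar_ge_half_near_0 by blast
  have S: "{x..} \<times> {0::real..} \<in> sets borel" by (rule sets_Times_borel) auto
  have S': "{x..} \<times> {0..} \<subseteq> Rp2" using assms by (auto simp: Rp2_def)
  have "ennreal (1/2) \<le> indicator {0..} r * age_section k w ({x..} \<times> {0..}) r"
    if "0 \<le> r" "r \<le> min \<delta> (w - x)" for r
  proof -
    have "{v. (w - r, v - r) \<in> {x..} \<times> {0..}} = {r..}" using that by auto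
    then have "indicator {0..} r * age_section k w ({x..} \<times> {0..}) r = ennreal (Gbar (Gam k) r)"
      using that by (simp add: age_section_def emeasure_Gam Gbar_eq_measure_atLeast)
    moreover have "1/2 \<le> Gbar (Gam k) r" using \<delta>(2) that by simp
    ultimately show ?thesis by (simp only: ennreal_leI)
  qed
  then have "0 < (\<integral>\<^sup>+ r. indicator {0..} r * age_section k w ({x..} \<times> {0..}) r \<partial>lborel)"
    using \<delta>(1) assms
    by (intro nn_integral_pos_of_interval[where a=0 and b="min \<delta> (w - x)"]) (auto simp: ennreal_inverse_positive)
  then show ?thesis using lam_pos[of k] by (simp add: emeasure_theta_quadrant[OF S S'] ennreal_zero_less_mult_iff)
qed

lemma theta_w_eq_theta:
  assumes "0 \<le> w"
  shows "theta_w lam Gam w = theta w"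
proof
  fix k
  have shifted: "{v. v - u \<in> {c..<d}} = {c + u..<d + u}" "{v. v - u \<in> {c..}} = {c + u..}" for c d u :: real
    by auto
  have rect: "measure (theta w k) ({a..<b} \<times> {c..<d}) =
      lam k * (\<integral>u\<in>{w - b..w - a}. measure (Gam k) {c + u..<d + u} \<partial>lborel)"
    if "0 \<le> a" "a < b" "b \<le> w" "0 \<le> c" for a b c d
  proof -
    have "{c..<d} \<subseteq> {0..}" using that(4) by auto
    from measure_theta_rect[OF that(1-3) _ this, unfolded shifted] show ?thesis by simp
  qed
  have rect_up: "measure (theta w k) ({a..<b} \<times> {c..}) =
      lam k * (\<integral>u\<in>{w - b..w - a}. measure (Gam k) {c + u..} \<partial>lborel)"
    if "0 \<le> a" "a < b" "b \<le> w" "0 \<le> c" for a b c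
  proof -
    have "{c..} \<subseteq> {0..}" using that(4) by auto
    from measure_theta_rect[OF that(1-3) _ this, unfolded shifted] show ?thesis by simp
  qed
  show "theta_w lam Gam w k = theta w k"
    unfolding theta_w_def
  proof (rule the_equality)
    show "theta w k \<in> M2 \<and> emeasure (theta w k) ({w..} \<times> {0..}) = 0 \<and>
      (\<forall>a b c d. 0 \<le> a \<and> a < b \<and> b \<le> w \<and> 0 \<le> c \<and> c < d \<longrightarrow>
        measure (theta w k) ({a..<b} \<times> {c..<d}) = lam k * (\<integral>u\<in>{w - b..w - a}. measure (Gam k) {c + u..<d + u} \<partial>lborel)) \<and>
      (\<forall>a b c. 0 \<le> a \<and> a < b \<and> b \<le> w \<and> 0 \<le> c \<longrightarrow>
        measure (theta w k) ({a..<b} \<times> {c..}) = lam k * (\<integral>u\<in>{w - b..w - a}. measure (Gam k) {c + u..} \<partial>lborel))"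
      using assms by (simp add: theta_in_M2 emeasure_theta_beyond rect rect_up)
    fix m assume m: "m \<in> M2 \<and> emeasure m ({w..} \<times> {0..}) = 0 \<and>
      (\<forall>a b c d. 0 \<le> a \<and> a < b \<and> b \<le> w \<and> 0 \<le> c \<and> c < d \<longrightarrow>
        measure m ({a..<b} \<times> {c..<d}) = lam k * (\<integral>u\<in>{w - b..w - a}. measure (Gam k) {c + u..<d + u} \<partial>lborel)) \<and>
      (\<forall>a b c. 0 \<le> a \<and> a < b \<and> b \<le> w \<and> 0 \<le> c \<longrightarrow>
        measure m ({a..<b} \<times> {c..}) = lam k * (\<integral>u\<in>{w - b..w - a}. measure (Gam k) {c + u..} \<partial>lborel))"
    show "m = theta w k"
      using m assms by (intro M2_eqI_rects_below[where w=w]) (simp_all add: theta_in_M2 emeasure_theta_beyond rect)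
  qed
qed

lemma emeasure_delta_plus_Gam_shift:
  assumes B: "B \<in> sets (borel :: (real \<times> real) measure)"
  shows "emeasure (delta_plus y \<Otimes>\<^sub>M Gam k) (shift B (c, c)) = (if 0 < y then age_section k y B c else 0)"
proof -
  interpret G: prob_space "Gam k" by (rule Gam_prob)
  have sB: "shift B (c, c) \<in> sets (borel \<Otimes>\<^sub>M Gam k)" using sets_shift[OF B] by simp
  have sets_delta: "sets (delta_plus y \<Otimes>\<^sub>M Gam k) = sets (borel \<Otimes>\<^sub>M Gam k)"
    by (rule sets_pair_measure_cong) (simp_all add: delta_plus_def)
  have "emeasure (delta_plus y \<Otimes>\<^sub>M Gam k) (shift B (c, c))
      = (\<integral>\<^sup>+x. emeasure (Gam k) (Pair x -` shift B (c, c)) \<partial>delta_plus y)"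
    using sB sets_delta by (intro G.emeasure_pair_measure_alt) simp
  also have "\<dots> = (if 0 < y then emeasure (Gam k) (Pair y -` shift B (c, c)) else 0)"
    using G.measurable_emeasure_Pair[OF sB] by (simp add: delta_plus_def nn_integral_return)
  also have "Pair y -` shift B (c, c) = {v. (y - c, v - c) \<in> B}"
    by (auto simp: shift_def)
  finally show ?thesis by (simp add: age_section_def)
qed

lemma age_section_shift:
  assumes "B \<subseteq> Rp2" "0 \<le> t"
  shows "age_section k w (shift B (t, t) \<inter> Rp2) r = age_section k w B (r + t)"
proof -
  have "(w - r, v - r) \<in> shift B (t, t) \<inter> Rp2 \<longleftrightarrow> (w - (r + t), v - (r + t)) \<in> B" for v
    using assms by (auto simp: shift_def Rp2_def diff_diff_eq)
  then show ?thesis by (simp add: age_section_def)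
qed

lemma theta_fluid_eq:
  assumes B: "B \<in> sets borel" "B \<subseteq> Rp2" and w: "0 < w" and t: "0 \<le> t"
  shows "emeasure (theta w k) B = emeasure (theta w k) (shift B (t, t)) +
     ennreal (lam k) * (\<integral>\<^sup>+ s \<in> {0..t}. emeasure (delta_plus w \<Otimes>\<^sub>M Gam k) (shift B (t - s, t - s)) \<partial>lborel)"
proof -
  have Km: "age_section k w B \<in> borel_measurable borel" by (rule measurable_age_section[OF B(1)])
  have "emeasure (theta w k) (shift B (t, t))
      = ennreal (lam k) * (\<integral>\<^sup>+ r. indicator {0..} r * age_section k w (shift B (t, t) \<inter> Rp2) r \<partial>lborel)"
    by (rule emeasure_theta[OF sets_shift[OF B(1)]])
  also have "\<dots> = ennreal (lam k) * (\<integral>\<^sup>+ r. indicator {0..} r * age_section k w B (r + t) \<partial>lborel)"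
    by (simp add: age_section_shift[OF B(2) t])
  also have "\<dots> = ennreal (lam k) * (\<integral>\<^sup>+ r. indicator {t..} r * age_section k w B r \<partial>lborel)"
    by (simp add: nn_integral_translate[OF Km])
  finally have old: "emeasure (theta w k) (shift B (t, t))
      = ennreal (lam k) * (\<integral>\<^sup>+ r. indicator {t..} r * age_section k w B r \<partial>lborel)" .
  have "(\<integral>\<^sup>+ s \<in> {0..t}. emeasure (delta_plus w \<Otimes>\<^sub>M Gam k) (shift B (t - s, t - s)) \<partial>lborel)
      = (\<integral>\<^sup>+ s \<in> {0..t}. age_section k w B (t - s) \<partial>lborel)"
    by (intro nn_integral_cong) (simp add: emeasure_delta_plus_Gam_shift[OF B(1)] w)
  also have "\<dots> = (\<integral>\<^sup>+ r. indicator {0..t} r * age_section k w B r \<partial>lborel)"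
    by (rule nn_integral_reflect[OF Km])
  finally have new: "(\<integral>\<^sup>+ s \<in> {0..t}. emeasure (delta_plus w \<Otimes>\<^sub>M Gam k) (shift B (t - s, t - s)) \<partial>lborel)
      = (\<integral>\<^sup>+ r. indicator {0..t} r * age_section k w B r \<partial>lborel)" .
  show ?thesis
    unfolding old new emeasure_theta_quadrant[OF B] nn_integral_split_halfline[OF Km t]
    by (simp add: distrib_left)
qed

lemma wset_theta:
  assumes "0 < w"
  shows "wset (theta w) = {0..<w}"
proof (intro set_eqI iffI)
  fix x assume "x \<in> wset (theta w)"
  then have x: "0 \<le> x" "0 < (\<Sum>k\<in>UNIV. emeasure (theta w k) ({x..} \<times> {0..}))"
    by (simp_all add: wset_def plus_em_def)
  have "x < w"
  proof (rule ccontr)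
    assume "\<not> x < w"
    then have "(\<Sum>k\<in>UNIV. emeasure (theta w k) ({x..} \<times> {0..})) = 0"
      using assms by (simp add: emeasure_theta_beyond)
    with x show False by simp
  qed
  with x show "x \<in> {0..<w}" by simp
next
  fix x assume x: "x \<in> {0..<w}"
  obtain k :: 'k where True by simp
  have "0 < emeasure (theta w k) ({x..} \<times> {0..})" using emeasure_theta_pos x by simp
  also have "\<dots> \<le> (\<Sum>k\<in>UNIV. emeasure (theta w k) ({x..} \<times> {0..}))"
    by (rule member_le_sum) simp_all
  finally show "x \<in> wset (theta w)" using x by (simp add: wset_def plus_em_def)
qed

lemma w_th_theta: "0 < w \<Longrightarrow> w_th (theta w) = w"
  by (simp add: w_th_def wset_theta insert_absorb cSup_atLeastLessThan)

lemma theta_in_Istates: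
  assumes w: "load w = 1"
  shows "theta w \<in> Istates Gam"
proof -
  have w0: "0 < w" using load_eq_1_pos[OF w] .
  have "\<exists>k. 0 < Gbar (Gam k) w"
  proof (rule ccontr)
    assume "\<nexists>k. 0 < Gbar (Gam k) w"
    then have "\<And>k. Gbar (Gam k) w = 0" using Gbar_nonneg by (metis less_eq_real_def)
    then show False using w by (simp add: load_def)
  qed
  then obtain k0 where k0: "0 < Gbar (Gam k0) w" by blast
  have "0 < Max (range (\<lambda>k. Gbar (Gam k) (w - e)))" if "e > 0" for e
  proof -
    have "Gbar (Gam k0) w \<le> Gbar (Gam k0) (w - e)" using that by (intro Gbar_antimono) simp
    also have "\<dots> \<le> Max (range (\<lambda>k. Gbar (Gam k) (w - e)))" by (rule Max_ge) auto
    finally show ?thesis using k0 by simp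
  qed
  then show ?thesis
    using w0 by (simp add: Istates_def w_th_theta theta_in_M2 wset_theta plus_em_def emeasure_theta_Cset)
qed

lemma workload_sol_const:
  assumes "load w = 1"
  shows "workload_sol lam mu Gam (\<lambda>_. w) w"
proof -
  have "(\<Sum>k\<in>UNIV. rho lam mu k * integral {0..t} (\<lambda>s. Gbar (Gam k) w)) = t * load w" if "0 \<le> t" for t
    using that by (simp add: load_def sum_distrib_left algebra_simps)
  then show ?thesis using load_eq_1_pos[OF assms] assms by (auto simp: workload_sol_def)
qed

lemma invariant_state_theta:
  assumes w: "load w = 1"
  shows "invariant_state lam mu Gam (theta w)"
proof -
  have w0: "0 < w" using load_eq_1_pos[OF w] .
  have "fluid_sol lam mu Gam (theta w) (\<lambda>_. theta w)"
    unfolding fluid_sol_def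
  proof (intro conjI allI impI exI[of _ "\<lambda>_. w"])
    show "workload_sol lam mu Gam (\<lambda>_. w) (w_th (theta w))"
      using workload_sol_const[OF w] by (simp add: w_th_theta[OF w0])
    show "theta w k \<in> M2" for k using w0 by (simp add: theta_in_M2)
  next
    fix k B and t :: real
    assume "B \<in> sets borel \<and> B \<subseteq> Rp2 \<and> 0 \<le> t"
    then show "emeasure (theta w k) B = emeasure (theta w k) (shift B (t, t)) +
       ennreal (lam k) * (\<integral>\<^sup>+ s \<in> {0..t}. emeasure (delta_plus w \<Otimes>\<^sub>M Gam k) (shift B (t - s, t - s)) \<partial>lborel)"
      using theta_fluid_eq w0 by blast
  qed simp
  then show ?thesis using theta_in_Istates[OF w] by (auto simp: invariant_state_def)
qed

lemma emeasure_delta_plus_Gam_upper: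
  "emeasure (delta_plus y \<Otimes>\<^sub>M Gam k) (shift ({x..} \<times> {0..}) (c, c)) =
    (if 0 < y \<and> x \<le> y - c then ennreal (Gbar (Gam k) c) else 0)"
proof -
  have "{v. (y - c, v - c) \<in> {x..} \<times> {0..}} = (if x \<le> y - c then {c..} else {})" by auto
  then have "age_section k y ({x..} \<times> {0..}) c = (if x \<le> y - c then ennreal (Gbar (Gam k) c) else 0)"
    by (simp add: age_section_def emeasure_Gam Gbar_eq_measure_atLeast)
  moreover have "{x..} \<times> {0::real..} \<in> sets borel" by (rule sets_Times_borel) auto
  ultimately show ?thesis by (simp add: emeasure_delta_plus_Gam_shift)
qed

end

subsection \<open>Workload solutions\<close>

locale workload_solution = fluid_model lam mu Gam
  for lam mu :: "'k::finite \<Rightarrow> real" and Gam :: "'k \<Rightarrow> real measure" +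
  fixes W :: "real \<Rightarrow> real" and w0 :: real
  assumes workload_sol: "workload_sol lam mu Gam W w0"
begin

lemma W_0: "W 0 = w0"
  using workload_sol by (simp add: workload_sol_def)

lemma W_integrable:
  assumes "0 \<le> s" "s \<le> t"
  shows "(\<lambda>u. Gbar (Gam k) (W u)) integrable_on {s..t}"
proof (rule integrable_on_subinterval)
  show "(\<lambda>u. Gbar (Gam k) (W u)) integrable_on {0..t}"
    using workload_sol assms by (simp add: workload_sol_def)
qed (use assms in auto)

lemma rho_Gbar_W_integrable:
  "0 \<le> s \<Longrightarrow> s \<le> t \<Longrightarrow> (\<lambda>u. rho lam mu k * Gbar (Gam k) (W u)) integrable_on {s..t}"
  using rho_pos[of k] W_integrable[of s t k] by simp

lemma load_W_integrable:
  "0 \<le> s \<Longrightarrow> s \<le> t \<Longrightarrow> (\<lambda>u. load (W u)) integrable_on {s..t}"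
  unfolding load_def by (intro integrable_sum rho_Gbar_W_integrable) auto

lemma W_increment:
  assumes st: "0 \<le> s" "s \<le> t"
  shows "W t - W s = integral {s..t} (\<lambda>u. load (W u)) - (t - s)"
proof -
  let ?I = "\<lambda>k a b. integral {a..b} (\<lambda>u. Gbar (Gam k) (W u))"
  have split: "?I k 0 t - ?I k 0 s = ?I k s t" for k
    using Henstock_Kurzweil_Integration.integral_combine[OF _ st(2) W_integrable[of 0 t k]] st by simp
  have "integral {s..t} (\<lambda>u. load (W u)) = (\<Sum>k\<in>UNIV. rho lam mu k * ?I k s t)"
    unfolding load_def using rho_Gbar_W_integrable[OF st] by (subst integral_sum) auto
  moreover have "W t - W s = (\<Sum>k\<in>UNIV. rho lam mu k * (?I k 0 t - ?I k 0 s)) - (t - s)"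
    using workload_sol st by (simp add: workload_sol_def sum_subtractf right_diff_distrib)
  ultimately show ?thesis by (simp add: split)
qed

lemma W_increment_le:
  assumes st: "0 \<le> s" "s \<le> t" and bound: "\<And>u. u \<in> {s..t} \<Longrightarrow> load (W u) \<le> c"
  shows "W t - W s \<le> (c - 1) * (t - s)"
proof -
  have "(\<lambda>u. load (W u)) integrable_on {s..t}" by (rule load_W_integrable[OF st])
  then have "integral {s..t} (\<lambda>u. load (W u)) \<le> integral {s..t} (\<lambda>u. c)"
    by (rule integral_le) (auto simp: bound)
  then show ?thesis using W_increment[OF st] st by (simp add: algebra_simps)
qed

lemma W_increment_ge:
  assumes st: "0 \<le> s" "s \<le> t" and bound: "\<And>u. u \<in> {s..t} \<Longrightarrow> c \<le> load (W u)"
  shows "(c - 1) * (t - s) \<le> W t - W s"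
proof -
  have "(\<lambda>u. load (W u)) integrable_on {s..t}" by (rule load_W_integrable[OF st])
  then have "integral {s..t} (\<lambda>u. c) \<le> integral {s..t} (\<lambda>u. load (W u))"
    by (rule integral_le[rotated]) (auto simp: bound)
  then show ?thesis using W_increment[OF st] st by (simp add: algebra_simps)
qed

lemma W_lipschitz:
  assumes "0 \<le> s" "s \<le> t"
  shows "\<bar>W t - W s\<bar> \<le> (\<Sum>k\<in>UNIV. rho lam mu k) * (t - s)"
proof -
  have "W t - W s \<le> ((\<Sum>k\<in>UNIV. rho lam mu k) - 1) * (t - s)"
    using assms load_le_rho_sum by (intro W_increment_le) auto
  moreover have "(0 - 1) * (t - s) \<le> W t - W s"
    using assms load_nonneg by (intro W_increment_ge) auto
  moreover have "1 * (t - s) \<le> (\<Sum>k\<in>UNIV. rho lam mu k) * (t - s)"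
    using assms rho_gt1 by (intro mult_right_mono) auto
  ultimately show ?thesis using assms by (simp add: abs_le_iff algebra_simps)
qed

lemma continuous_on_W: "continuous_on {0..} W"
proof (rule lipschitz_on_continuous_on)
  show "(\<Sum>k\<in>UNIV. rho lam mu k)-lipschitz_on {0..} W"
  proof (rule lipschitz_onI)
    fix s t :: real assume "s \<in> {0..}" "t \<in> {0..}"
    then show "dist (W s) (W t) \<le> (\<Sum>k\<in>UNIV. rho lam mu k) * dist s t"
      using W_lipschitz[of s t] W_lipschitz[of t s]
      by (cases "s \<le> t") (auto simp: dist_real_def abs_minus_commute)
  qed (use rho_gt1 in simp)
qed

text \<open>Where the load is at most \<open>1\<close> the workload cannot increase, so the workload cannot
  cross such a level \<open>c\<close> upwards: after its last visit below \<open>c\<close> it would stay above \<open>c\<close>.\<close>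

lemma W_stays_below:
  assumes load_le: "\<And>u. c \<le> u \<Longrightarrow> load u \<le> 1" and \<sigma>: "0 \<le> \<sigma>" "\<sigma> \<le> t" "W \<sigma> \<le> c"
  shows "W t \<le> c"
proof (rule ccontr)
  assume "\<not> W t \<le> c"
  define A where "A = {\<sigma>..t} \<inter> W -` {..c}"
  have cont: "continuous_on {\<sigma>..t} W"
    using continuous_on_W by (rule continuous_on_subset) (use \<sigma> in auto)
  have "closed A" unfolding A_def by (intro continuous_closed_preimage cont) auto
  moreover have "\<sigma> \<in> A" using \<sigma> by (simp add: A_def)
  moreover have bdd: "bdd_above A" by (auto simp: A_def bdd_above_def)
  ultimately have "Sup A \<in> A" by (intro closed_contains_Sup) auto
  define \<tau> where "\<tau> = Sup A"
  have \<tau>: "\<sigma> \<le> \<tau>" "\<tau> \<le> t" "W \<tau> \<le> c" using \<open>Sup A \<in> A\<close> by (simp_all add: A_def \<tau>_def)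
  have above: "c < W u" if "\<tau> < u" "u \<le> t" for u
  proof -
    have "u \<notin> A" using cSup_upper[OF _ bdd, of u] that by (auto simp: \<tau>_def)
    then show ?thesis using that \<tau> by (auto simp: A_def)
  qed
  obtain u where u: "\<tau> \<le> u" "u \<le> t" "W u = c"
    using IVT'[of W \<tau> c t] \<tau> \<open>\<not> W t \<le> c\<close> continuous_on_subset[OF cont, of "{\<tau>..t}"] by auto
  then have "W \<tau> = c" using above[of u] by (cases "u = \<tau>") auto
  have "W t - W \<tau> \<le> (1 - 1) * (t - \<tau>)"
  proof (rule W_increment_le)
    fix u assume "u \<in> {\<tau>..t}"
    then have "c \<le> W u" using above[of u] \<open>W \<tau> = c\<close> by (cases "u = \<tau>") auto
    then show "load (W u) \<le> 1" by (rule load_le)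
  qed (use \<tau> \<sigma> in auto)
  with \<open>W \<tau> = c\<close> \<open>\<not> W t \<le> c\<close> show False by simp
qed

lemma W_eventually_below:
  assumes e: "0 < e" and \<eta>: "0 < \<eta>" and band: "\<And>u. w0 - e \<le> u \<Longrightarrow> load u \<le> 1 - \<eta>"
    and s: "e / \<eta> \<le> s"
  shows "W s \<le> w0 - e"
proof -
  have "0 \<le> e / \<eta>" using e \<eta> by simp
  then have s0: "0 \<le> s" using s by linarith
  show ?thesis
  proof (cases "\<exists>\<sigma>\<in>{0..s}. W \<sigma> \<le> w0 - e")
    case True
    then obtain \<sigma> where \<sigma>: "0 \<le> \<sigma>" "\<sigma> \<le> s" "W \<sigma> \<le> w0 - e" by auto
    have "load u \<le> 1" if "w0 - e \<le> u" for u using band[OF that] \<eta> by simp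
    then show ?thesis using \<sigma> by (rule W_stays_below)
  next
    case False
    then have "w0 - e \<le> W u" if "u \<in> {0..s}" for u
      using that by (meson linorder_not_le order.strict_implies_order)
    then have "W s - W 0 \<le> ((1 - \<eta>) - 1) * (s - 0)"
      using s0 by (intro W_increment_le band) auto
    moreover have "e \<le> \<eta> * s" using s \<eta> by (simp add: field_simps)
    ultimately show ?thesis by (simp add: W_0)
  qed
qed

end

subsection \<open>Invariant states\<close>

locale invariant_state_analysis = workload_solution lam mu Gam W w0
  for lam mu :: "'k::finite \<Rightarrow> real" and Gam :: "'k \<Rightarrow> real measure"
    and W :: "real \<Rightarrow> real" and w0 :: real +
  fixes th :: "'k \<Rightarrow> (real \<times> real) measure"
  assumes th_Istates: "th \<in> Istates Gam" and w0_eq: "w0 = w_th th"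
    and fluid_eq: "\<And>k B t. B \<in> sets borel \<Longrightarrow> B \<subseteq> Rp2 \<Longrightarrow> 0 \<le> t \<Longrightarrow>
      emeasure (th k) B = emeasure (th k) (shift B (t, t)) +
        ennreal (lam k) * (\<integral>\<^sup>+ s \<in> {0..t}. emeasure (delta_plus (W s) \<Otimes>\<^sub>M Gam k) (shift B (t - s, t - s)) \<partial>lborel)"
begin

lemma th_M2: "th k \<in> M2"
  using th_Istates by (simp add: Istates_def)

lemma bdd_above_wset: "bdd_above (insert 0 (wset th))"
  using th_Istates by (simp add: Istates_def)

lemma w0_nonneg: "0 \<le> w0"
  unfolding w0_eq w_th_def by (rule cSup_upper[OF _ bdd_above_wset]) simp

lemma emeasure_above_w0:
  assumes "w0 < x"
  shows "emeasure (th k) ({x..} \<times> {0..}) = 0"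
proof -
  have "x \<notin> wset th"
    using cSup_upper[OF _ bdd_above_wset, of x] assms by (auto simp: w0_eq w_th_def)
  then have "plus_em th ({x..} \<times> {0..}) = 0"
    using assms w0_nonneg by (simp add: wset_def)
  then show ?thesis by (simp add: plus_em_def)
qed

lemma emeasure_below_w0:
  assumes "0 \<le> x" "x < w0"
  shows "\<exists>k. 0 < emeasure (th k) ({x..} \<times> {0..})"
proof -
  obtain z where z: "z \<in> insert 0 (wset th)" "x < z"
    using assms less_cSup_iff[OF _ bdd_above_wset, of x] by (auto simp: w0_eq w_th_def)
  then have "0 < plus_em th ({z..} \<times> {0..})" using assms by (auto simp: wset_def)
  then obtain k where k: "0 < emeasure (th k) ({z..} \<times> {0..})"
    unfolding plus_em_def by (metis not_gr_zero sum.neutral)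
  have "{x..} \<times> {0::real..} \<in> sets (th k)"
    using th_M2[of k] sets_Times_borel[of "{x..}" "{0..}"] by (simp add: M2_def)
  then have "emeasure (th k) ({z..} \<times> {0..}) \<le> emeasure (th k) ({x..} \<times> {0..})"
    using z by (intro emeasure_mono) auto
  with k show ?thesis using less_le_trans by blast
qed

lemma emeasure_shift_beyond_w0:
  assumes "B \<subseteq> Rp2" "w0 < T"
  shows "emeasure (th k) (shift B (T, T)) = 0"
proof -
  have "shift B (T, T) \<subseteq> {T..} \<times> {T..}" by (rule shift_subset_quadrant[OF assms(1)])
  also have "\<dots> \<subseteq> {T..} \<times> {0..}" using assms(2) w0_nonneg by auto
  finally have "emeasure (th k) (shift B (T, T)) \<le> emeasure (th k) ({T..} \<times> {0..})"
    using th_M2[of k] sets_Times_borel[of "{T..}" "{0::real..}"] by (intro emeasure_mono) (simp_all add: M2_def)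
  then show ?thesis using emeasure_above_w0[OF assms(2)] by simp
qed

lemma emeasure_shift_upper_beyond_w0:
  assumes "0 \<le> t" "w0 < x + t"
  shows "emeasure (th k) (shift ({x..} \<times> {0..}) (t, t)) = 0"
proof -
  have "shift ({x..} \<times> {0..}) (t, t) \<subseteq> {x + t..} \<times> {0..}" using assms(1) by (auto simp: shift_def)
  then have "emeasure (th k) (shift ({x..} \<times> {0..}) (t, t)) \<le> emeasure (th k) ({x + t..} \<times> {0..})"
    using th_M2[of k] sets_Times_borel[of "{x + t..}" "{0::real..}"] by (intro emeasure_mono) (simp_all add: M2_def)
  then show ?thesis using emeasure_above_w0[OF assms(2)] by simp
qed

text \<open>The fluid equation for the upper sets \<open>[x,\<infinity>) \<times> \<real>\<^sub>+\<close>: a customer arriving at time \<open>s\<close>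
  is at height \<open>W s - (t - s)\<close> at time \<open>t\<close>.\<close>

lemma fluid_eq_upper:
  assumes "0 \<le> x" "0 \<le> t"
  shows "emeasure (th k) ({x..} \<times> {0..}) = emeasure (th k) (shift ({x..} \<times> {0..}) (t, t)) +
    ennreal (lam k) * (\<integral>\<^sup>+ s \<in> {0..t}.
      (if 0 < W s \<and> x \<le> W s - (t - s) then ennreal (Gbar (Gam k) (t - s)) else 0) \<partial>lborel)"
proof -
  have "{x..} \<times> {0::real..} \<in> sets borel" by (rule sets_Times_borel) auto
  moreover have "{x..} \<times> {0..} \<subseteq> Rp2" using assms by (auto simp: Rp2_def)
  ultimately show ?thesis
    using fluid_eq[OF _ _ assms(2), of "{x..} \<times> {0..}" k] by (simp add: emeasure_delta_plus_Gam_upper)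
qed

lemma W_le_w0:
  assumes T: "0 \<le> T"
  shows "W T \<le> w0"
proof (rule ccontr)
  assume "\<not> W T \<le> w0"
  define x where "x = (w0 + W T) / 2"
  define L where "L = (\<Sum>k\<in>UNIV. rho lam mu k)"
  have x: "w0 < x" "x < W T" using \<open>\<not> W T \<le> w0\<close> by (auto simp: x_def)
  have "0 < T" using T x W_0 by (cases "T = 0") auto
  obtain k :: 'k where True by simp
  obtain \<delta>1 where \<delta>1: "0 < \<delta>1" "\<And>r. r \<le> \<delta>1 \<Longrightarrow> 1/2 \<le> Gbar (Gam k) r"
    using Gbar_ge_half_near_0 by blast
  define \<delta> where "\<delta> = min (min \<delta>1 T) ((W T - x) / (L + 1))"
  have L: "1 < L" using rho_gt1 by (simp add: L_def)
  have \<delta>: "0 < \<delta>" "\<delta> \<le> T" "\<delta> \<le> \<delta>1"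
    using \<delta>1 \<open>0 < T\<close> x L by (simp_all add: \<delta>_def)
  have "(L + 1) * \<delta> \<le> (L + 1) * ((W T - x) / (L + 1))"
    using L by (intro mult_left_mono) (simp_all add: \<delta>_def)
  then have \<delta>_small: "(L + 1) * \<delta> \<le> W T - x" using L by simp
  have half: "ennreal (1/2) \<le> (if 0 < W s \<and> x \<le> W s - (T - s) then ennreal (Gbar (Gam k) (T - s)) else 0)
      * indicator {0..T} s" if s: "T - \<delta> \<le> s" "s \<le> T" for s
  proof -
    have "\<bar>W T - W s\<bar> \<le> L * (T - s)" using W_lipschitz[of s T] s \<delta> by (simp add: L_def)
    moreover have "(L + 1) * (T - s) \<le> (L + 1) * \<delta>" using s L by (intro mult_left_mono) auto
    ultimately have "x \<le> W s - (T - s)" using \<delta>_small by (simp add: abs_le_iff algebra_simps)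
    then have "(if 0 < W s \<and> x \<le> W s - (T - s) then ennreal (Gbar (Gam k) (T - s)) else 0)
        * indicator {0..T} s = ennreal (Gbar (Gam k) (T - s))"
      using s \<delta> x w0_nonneg by simp
    moreover have "1/2 \<le> Gbar (Gam k) (T - s)" using \<delta>1(2)[of "T - s"] s \<delta> by simp
    ultimately show ?thesis by (simp only: ennreal_leI)
  qed
  have "0 < (\<integral>\<^sup>+ s \<in> {0..T}.
      (if 0 < W s \<and> x \<le> W s - (T - s) then ennreal (Gbar (Gam k) (T - s)) else 0) \<partial>lborel)"
    by (rule nn_integral_pos_of_interval[OF _ half]) (use \<delta>(1) in \<open>auto simp: ennreal_inverse_positive\<close>)
  moreover have "emeasure (th k) ({x..} \<times> {0..}) = 0" by (rule emeasure_above_w0[OF x(1)])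
  ultimately show False
    using fluid_eq_upper[of x T k] x w0_nonneg T lam_pos[of k] by (simp add: ennreal_zero_less_mult_iff)
qed

lemma load_w0_ge_1: "1 \<le> load w0"
proof (rule ccontr)
  assume "\<not> 1 \<le> load w0"
  then have "load w0 < 1" by simp
  then obtain e0 where e0: "0 < e0" "load (w0 - e0) < 1" using load_lt_left by blast
  have "0 < w0" using \<open>load w0 < 1\<close> load_0 rho_gt1 w0_nonneg by (cases "w0 = 0") auto
  define e where "e = min e0 w0"
  define \<eta> where "\<eta> = 1 - load (w0 - e0)"
  have e: "0 < e" "e \<le> w0" "e \<le> e0" using e0 \<open>0 < w0\<close> by (simp_all add: e_def)
  have \<eta>: "0 < \<eta>" using e0 by (simp add: \<eta>_def)
  have band: "load u \<le> 1 - \<eta>" if "w0 - e \<le> u" for u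
    using load_antimono[of "w0 - e0" u] that e by (simp add: \<eta>_def)
  define x where "x = w0 - e / 2"
  define t where "t = e / \<eta> + e / 2"
  have "0 < e / \<eta>" using e \<eta> by simp
  then have x: "0 \<le> x" "x < w0" and t: "0 \<le> t" "w0 < x + t"
    using e by (simp_all add: x_def t_def)
  obtain k where k: "0 < emeasure (th k) ({x..} \<times> {0..})" using emeasure_below_w0[OF x] by blast
  have no_arrivals: "\<not> (0 < W s \<and> x \<le> W s - (t - s))" if s: "0 \<le> s" "s \<le> t" for s
  proof (cases "s < e / \<eta>")
    case True
    then have "e / 2 < t - s" unfolding t_def by linarith
    then show ?thesis using W_le_w0[OF s(1)] by (simp add: x_def)
  next
    case False
    then have "W s \<le> w0 - e" using W_eventually_below[OF e(1) \<eta> band] leI by blast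
    then show ?thesis using s e(1) by (simp add: x_def)
  qed
  have "(if 0 < W s \<and> x \<le> W s - (t - s) then ennreal (Gbar (Gam k) (t - s)) else 0) * indicator {0..t} s = 0"
    for s
    using no_arrivals[of s] by (cases "s \<in> {0..t}") auto
  then have "(\<integral>\<^sup>+ s \<in> {0..t}.
      (if 0 < W s \<and> x \<le> W s - (t - s) then ennreal (Gbar (Gam k) (t - s)) else 0) \<partial>lborel)
      = (\<integral>\<^sup>+ s. 0 \<partial>(lborel :: real measure))"
    by (intro nn_integral_cong) simp
  moreover have "emeasure (th k) (shift ({x..} \<times> {0..}) (t, t)) = 0"
    using t by (rule emeasure_shift_upper_beyond_w0)
  ultimately show False using fluid_eq_upper[OF x(1) t(1), of k] k by simp
qed

lemma W_const: "0 \<le> t \<Longrightarrow> W t = w0" and load_w0: "load w0 = 1"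
proof -
  have const: "W t = w0" if "0 \<le> t" for t
  proof -
    have "1 \<le> load (W u)" if "u \<in> {0..t}" for u
      using load_antimono[OF W_le_w0[of u]] load_w0_ge_1 that by simp
    then have "(1 - 1) * (t - 0) \<le> W t - W 0"
      using that by (intro W_increment_ge) auto
    then show ?thesis using W_le_w0[OF that] W_0 by simp
  qed
  then show "0 \<le> t \<Longrightarrow> W t = w0" .
  have "W 1 - W 0 = integral {0..1} (\<lambda>u. load (W u)) - (1 - 0)" by (rule W_increment) simp_all
  also have "integral {0..1} (\<lambda>u. load (W u)) = integral {0..1} (\<lambda>u::real. load w0)"
    by (rule integral_cong) (simp add: const)
  finally show "load w0 = 1" using const[of 1] W_0 by simp
qed

lemma th_eq_theta: "th = theta w0"
proof
  fix k
  have w0: "0 < w0" using load_eq_1_pos[OF load_w0] .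
  show "th k = theta w0 k"
  proof (rule measure_eqI)
    show "sets (th k) = sets (theta w0 k)" using th_M2 by (simp add: M2_def)
    fix A assume "A \<in> sets (th k)"
    then have A: "A \<in> sets borel" using th_M2 by (simp add: M2_def)
    let ?B = "A \<inter> Rp2"
    have B: "?B \<in> sets borel" "?B \<subseteq> Rp2" using A sets_Rp2 by auto
    define T where "T = w0 + 1"
    have T: "0 \<le> T" "w0 < T" using w0 by (auto simp: T_def)
    have "shift ?B (T, T) \<subseteq> {T..} \<times> {T..}" by (rule shift_subset_quadrant[OF B(2)])
    also have "\<dots> \<subseteq> {T..} \<times> {0..}" using T by auto
    finally have "emeasure (theta w0 k) (shift ?B (T, T)) \<le> emeasure (theta w0 k) ({T..} \<times> {0..})"
      using sets_Times_borel[of "{T..}" "{0::real..}"] by (intro emeasure_mono) simp_all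
    then have theta_shift: "emeasure (theta w0 k) (shift ?B (T, T)) = 0"
      using emeasure_theta_beyond[of w0 T k] T w0 by simp
    have "emeasure (th k) A = emeasure (th k) ?B" by (rule M2_emeasure_Int_Rp2[OF th_M2 A])
    also have "\<dots> = emeasure (theta w0 k) ?B"
    proof -
      have "(\<integral>\<^sup>+ s \<in> {0..T}. emeasure (delta_plus (W s) \<Otimes>\<^sub>M Gam k) (shift ?B (T - s, T - s)) \<partial>lborel) =
          (\<integral>\<^sup>+ s \<in> {0..T}. emeasure (delta_plus w0 \<Otimes>\<^sub>M Gam k) (shift ?B (T - s, T - s)) \<partial>lborel)"
        by (intro nn_integral_cong) (simp add: indicator_def W_const)
      then show ?thesis
        using fluid_eq[OF B T(1), of k] theta_fluid_eq[OF B w0 T(1), of k]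
          emeasure_shift_beyond_w0[OF B(2) T(2)] theta_shift by simp
    qed
    also have "\<dots> = emeasure (theta w0 k) A"
      using theta_in_M2[of w0 k] w0 A by (simp add: M2_emeasure_Int_Rp2)
    finally show "emeasure (th k) A = emeasure (theta w0 k) A" .
  qed
qed

end

lemma (in fluid_model) invariant_state_iff:
  "invariant_state lam mu Gam th \<longleftrightarrow> (\<exists>w. load w = 1 \<and> th = theta w)"
proof
  assume "invariant_state lam mu Gam th"
  then obtain \<zeta> W where th: "th \<in> Istates Gam" and \<zeta>: "\<zeta> 0 = th" "\<forall>t\<ge>0. \<zeta> t = th"
    and W: "workload_sol lam mu Gam W (w_th th)"
    and eq: "\<forall>k B t. B \<in> sets borel \<and> B \<subseteq> Rp2 \<and> 0 \<le> t \<longrightarrow>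
      emeasure (\<zeta> t k) B = emeasure (\<zeta> 0 k) (shift B (t, t)) + ennreal (lam k) *
        (\<integral>\<^sup>+ s \<in> {0..t}. emeasure (delta_plus (W s) \<Otimes>\<^sub>M Gam k) (shift B (t - s, t - s)) \<partial>lborel)"
    unfolding invariant_state_def fluid_sol_def by blast
  interpret invariant_state_analysis lam mu Gam W "w_th th" th
    by unfold_locales (use W th eq \<zeta> in simp_all)
  show "\<exists>w. load w = 1 \<and> th = theta w" using load_w0 th_eq_theta by blast
next
  assume "\<exists>w. load w = 1 \<and> th = theta w"
  then show "invariant_state lam mu Gam th" using invariant_state_theta by blast
qed

theorem theorem3p3:
  fixes lam mu :: "'k::finite \<Rightarrow> real" and Gam :: "'k \<Rightarrow> real measure"
  assumes lam_pos: "\<forall>k. 0 < lam k"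
    and mu_pos: "\<forall>k. 0 < mu k"
    and rho_gt1: "(\<Sum>k\<in>UNIV. rho lam mu k) > 1"
    and Gam_prob: "\<forall>k. prob_space (Gam k)"
    and Gam_borel: "\<forall>k. sets (Gam k) = sets (borel :: real measure)"
    and Gam_pos: "\<forall>k. emeasure (Gam k) {..0} = 0"
    and Gam_cont: "\<forall>k x. measure (Gam k) {x} = 0"
    and Gam_mean: "\<forall>k. integrable (Gam k) (\<lambda>x. x)"
  shows "{th. invariant_state lam mu Gam th} = theta_w lam Gam ` {w_l lam mu Gam .. w_u lam mu Gam}"
proof -
  interpret fluid_model lam mu Gam
    by (rule fluid_model.intro) (use lam_pos mu_pos rho_gt1 Gam_prob Gam_borel Gam_pos Gam_cont in auto)
  have "theta_w lam Gam w = theta w" if "load w = 1" for w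
    using load_eq_1_pos[OF that] by (simp add: theta_w_eq_theta)
  then have "theta_w lam Gam ` {w_l lam mu Gam .. w_u lam mu Gam} = theta ` {w. load w = 1}"
    using load_eq_1_iff by (intro image_cong) auto
  then show ?thesis by (auto simp: invariant_state_iff)
qed

end
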